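(* Let $n\ge 1$ and $m\ge 2$ be integers with $m\nmid n$, let $\ell=\lfloor n/m\rfloor$, and let $G_{n,m}=\{\theta_{m,0}+\sum_{k=1}^{\ell}a_k\theta_{m,k}: a_k\in\mathbb{F}_2\}$. Then $G_{n,m}$ is an abelian group under composition of maps, and it is isomorphic to the unit group $\left(\mathbb{F}_2[z]/(z^{\ell+1})\right)^*$.
   Context: For $x=(x_0,\dots,x_{n-1})\in\mathbb{F}_2^n$, indices of coordinates are taken modulo $n$. For a nonnegative integer $k$, the map $\theta_{m,k}\colon\mathbb{F}_2^n\to\mathbb{F}_2^n$ is defined by $\theta_{m,k}(x)=y$ with $y_i=x_{i+mk}\prod_{1\le j\le mk-1,\ m\nmid j}(x_{i+j}+1)$ for $i\in\{0,\dots,n-1\}$; $\theta_{m,0}$ is the identity map. Sums of maps are pointwise sums. *)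

theory Defs
  imports "HOL-Library.Z2" "HOL-Library.FuncSet" "HOL-Algebra.Algebra"
begin

text \<open>Vectors of F_2^n with indices taken modulo n are represented as
  n-periodic sequences nat => bit.\<close>

definition vecs :: "nat \<Rightarrow> (nat \<Rightarrow> bit) set" where
  "vecs n = {x. \<forall>i. x (i + n) = x i}"

definition theta :: "nat \<Rightarrow> nat \<Rightarrow> (nat \<Rightarrow> bit) \<Rightarrow> (nat \<Rightarrow> bit)" where
  "theta m k x = (\<lambda>i. x (i + m * k) *
      (\<Prod>j\<in>{j. 1 \<le> j \<and> j \<le> m * k - 1 \<and> \<not> m dvd j}. x (i + j) + 1))"

definition Gnm_maps :: "nat \<Rightarrow> nat \<Rightarrow> ((nat \<Rightarrow> bit) \<Rightarrow> (nat \<Rightarrow> bit)) set" where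
  "Gnm_maps n m = {f. \<exists>a :: nat \<Rightarrow> bit. f = (\<lambda>x\<in>vecs n. \<lambda>i.
      theta m 0 x i + (\<Sum>k\<in>{1..n div m}. a k * theta m k x i))}"

definition Gnm :: "nat \<Rightarrow> nat \<Rightarrow> ((nat \<Rightarrow> bit) \<Rightarrow> (nat \<Rightarrow> bit)) monoid" where
  "Gnm n m = \<lparr>carrier = Gnm_maps n m, monoid.mult = compose (vecs n),
              one = (\<lambda>x\<in>vecs n. x)\<rparr>"

definition F2 :: "int set ring" where "F2 = ZFact 2"

definition F2z :: "int set list ring" where "F2z = univ_poly F2 (carrier F2)"

definition trunc_units :: "nat \<Rightarrow> int set list set monoid" where
  "trunc_units l = units_of (F2z Quot (PIdl\<^bsub>F2z\<^esub> (X\<^bsub>F2\<^esub> [^]\<^bsub>F2z\<^esub> (l + 1))))"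

end

(*
  Write theta_k for theta_{m,k}. By definition theta_k(x)_i reads off x_{i+mk}, provided x
  vanishes at all offsets in (0, mk) from i that are not multiples of m. For
  F_a = sum_k a_k theta_k with a_0 = 1 this gives theta_j(F_a(x)) = sum_k a_k theta_{j+k}(x):
  a one of F_a(x) within the window of theta_j would come from a one of x that interleaves
  with the one read off at the end of the window. Hence F_a o F_b = F_(a*b) for the
  convolution product a*b. On n-periodic vectors theta_k vanishes for mk > n, since m does not
  divide n, so the coefficients live in F_2[z]/(z^(l+1)); there the sequences with a_0 = 1
  are exactly the units. Evaluating F_a at 0 on the indicator of the residue class of mk
  returns a_k, so a is determined by F_a, and a |-> F_a is an isomorphism from the unit group
  onto G_{n,m}.
*)

theory Submission
  imports Defs
begin

(* Keep bit arithmetic as field operations instead of rewriting it to xor and and. *)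
declare add_bit_eq_xor[simp del] mult_bit_eq_and[simp del]

section \<open>The maps theta\<close>

definition clear :: "nat \<Rightarrow> (nat \<Rightarrow> bit) \<Rightarrow> nat \<Rightarrow> nat \<Rightarrow> bool" where
  "clear m x i t \<longleftrightarrow> (\<forall>s. 1 \<le> s \<longrightarrow> s < t \<longrightarrow> \<not> m dvd s \<longrightarrow> x (i + s) = 0)"

lemma clearD: "clear m x i t \<Longrightarrow> 1 \<le> s \<Longrightarrow> s < t \<Longrightarrow> \<not> m dvd s \<Longrightarrow> x (i + s) = 0"
  unfolding clear_def by blast

lemma clear_antimono: "clear m x i t' \<Longrightarrow> t \<le> t' \<Longrightarrow> clear m x i t"
  unfolding clear_def by auto

lemma clear_add_iff:
  assumes "clear m x i a" and "m dvd a"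
  shows "clear m x i (a + t) \<longleftrightarrow> clear m x (i + a) t"
proof
  assume long: "clear m x i (a + t)"
  show "clear m x (i + a) t"
    unfolding clear_def
  proof (intro allI impI)
    fix s assume "1 \<le> s" "s < t" "\<not> m dvd s"
    with \<open>m dvd a\<close> have "x (i + (a + s)) = 0"
      by (intro clearD[OF long]) (auto simp: dvd_add_right_iff)
    then show "x (i + a + s) = 0" by (simp add: add.assoc)
  qed
next
  assume tail: "clear m x (i + a) t"
  show "clear m x i (a + t)"
    unfolding clear_def
  proof (intro allI impI)
    fix s assume s: "1 \<le> s" "s < a + t" "\<not> m dvd s"
    show "x (i + s) = 0"
    proof (cases "s < a")
      case True
      then show ?thesis using clearD[OF assms(1) s(1) _ s(3)] by blast
    next
      case False
      then obtain r where r: "s = a + r" using le_Suc_ex not_less by blast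
      with s \<open>m dvd a\<close> have "\<not> m dvd r" "r < t"
        by (auto simp: dvd_add_right_iff)
      moreover from \<open>\<not> m dvd r\<close> have "1 \<le> r" by (cases r) auto
      ultimately show ?thesis using clearD[OF tail] r by (simp add: add.assoc)
    qed
  qed
qed

lemma prod_bit_plus_one:
  "finite S \<Longrightarrow> (\<Prod>j\<in>S. f j + (1::bit)) = (if \<forall>j\<in>S. f j = 0 then 1 else 0)"
  by (induction S rule: finite_induct) auto

lemma theta_eq: "theta m k x i = (if clear m x i (m * k) then x (i + m * k) else 0)"
proof -
  have window: "{j. 1 \<le> j \<and> j \<le> m * k - 1 \<and> \<not> m dvd j} = {j. 1 \<le> j \<and> j < m * k \<and> \<not> m dvd j}"
    by auto
  have fin: "finite {j. 1 \<le> j \<and> j < m * k \<and> \<not> m dvd j}"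
    by (rule finite_subset[of _ "{..<m * k}"]) auto
  show ?thesis
    unfolding theta_def window prod_bit_plus_one[OF fin] clear_def by auto
qed

lemma theta_eq_one_iff: "theta m k x i = 1 \<longleftrightarrow> clear m x i (m * k) \<and> x (i + m * k) = 1"
  by (simp add: theta_eq)

lemma theta_0 [simp]: "theta m 0 x = x"
  by (simp add: theta_eq clear_def fun_eq_iff)

lemma theta_add:
  "theta m (j + k) x i = (if clear m x i (m * j) then theta m k x (i + m * j) else 0)"
  using clear_add_iff[of m x i "m * j" "m * k"] clear_antimono[of m x i "m * (j + k)" "m * j"]
  by (auto simp: theta_eq distrib_left add.assoc)

text \<open>Two ones read off by theta at positions whose distance is not a multiple of m cannot
  interleave: the one that is read off first lies in the window the other must keep clear.\<close>

lemma theta_one_no_overlap: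
  assumes p: "theta m k x p = 1" and q: "theta m k' x (p + s) = 1"
    and "\<not> m dvd s" and "s < m * k"
  shows False
proof -
  from p q have cp: "clear m x p (m * k)" and xp: "x (p + m * k) = 1"
    and cq: "clear m x (p + s) (m * k')" and xq: "x (p + s + m * k') = 1"
    by (auto simp: theta_eq_one_iff)
  have s: "1 \<le> s" using \<open>\<not> m dvd s\<close> by (cases s) auto
  consider "s + m * k' < m * k" | "m * k < s + m * k'"
    using \<open>\<not> m dvd s\<close> by (metis dvd_add_left_iff dvd_triv_left linorder_neqE_nat)
  then show False
  proof cases
    case 1
    have "x (p + (s + m * k')) = 0"
      using \<open>\<not> m dvd s\<close> s by (intro clearD[OF cp _ 1]) (auto simp: dvd_add_left_iff)
    then show False using xq by (simp add: add.assoc)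
  next
    case 2
    define r where "r = m * k - s"
    have "s + r = m * k" using \<open>s < m * k\<close> by (simp add: r_def)
    then have "\<not> m dvd r"
      using \<open>\<not> m dvd s\<close> by (metis dvd_add_left_iff dvd_triv_left)
    then have "x (p + s + r) = 0"
      using 2 \<open>s < m * k\<close> by (intro clearD[OF cq]) (auto simp: r_def)
    then show False using xp \<open>s < m * k\<close> by (simp add: r_def)
  qed
qed

definition theta_sum :: "nat \<Rightarrow> (nat \<Rightarrow> bit) \<Rightarrow> nat \<Rightarrow> (nat \<Rightarrow> bit) \<Rightarrow> nat \<Rightarrow> bit" where
  "theta_sum m a N x = (\<lambda>i. \<Sum>k\<le>N. a k * theta m k x i)"

lemma theta_sum_eq_head_tail: "theta_sum m a N x i = a 0 * x i + (\<Sum>k\<in>{1..N}. a k * theta m k x i)"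
proof -
  have "{..N} = insert 0 {1..N}" by auto
  then show ?thesis by (simp add: theta_sum_def)
qed

lemma theta_sum_eq_one:
  assumes "theta_sum m a N x i = 1"
  obtains k where "k \<le> N" "theta m k x i = 1"
proof -
  from assms have "(\<Sum>k\<le>N. a k * theta m k x i) \<noteq> 0"
    by (simp add: theta_sum_def)
  then obtain k where "k \<in> {..N}" "a k * theta m k x i \<noteq> 0"
    by (rule sum.not_neutral_contains_not_neutral)
  then show thesis using that by (cases "theta m k x i") auto
qed

lemma theta_sum_eq_zero:
  assumes "a 0 = 1" and "x i = 1" and "theta_sum m a N x i = 0"
  obtains k where "1 \<le> k" "k \<le> N" "theta m k x i = 1"
proof -
  have "1 + (\<Sum>k\<in>{1..N}. a k * theta m k x i) = 0"
    using assms theta_sum_eq_head_tail[of m a N x i] by simp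
  then have "(\<Sum>k\<in>{1..N}. a k * theta m k x i) \<noteq> 0"
    by (auto simp: add_bit_eq_xor)
  then obtain k where "k \<in> {1..N}" "a k * theta m k x i \<noteq> 0"
    by (rule sum.not_neutral_contains_not_neutral)
  then show thesis using that by (cases "theta m k x i") auto
qed

lemma clear_theta_sum:
  assumes clear: "clear m x i (m * j)" and one: "theta_sum m a N x (i + m * j) = 1"
  shows "clear m (theta_sum m a N x) i (m * j)"
  unfolding clear_def
proof (intro allI impI)
  fix s assume s: "1 \<le> s" "s < m * j" "\<not> m dvd s"
  obtain k where "theta m k x (i + m * j) = 1"
    using one by (rule theta_sum_eq_one)
  then have far: "theta m (j + k) x i = 1"
    using clear by (simp add: theta_add)
  show "theta_sum m a N x (i + s) = 0"
  proof (rule ccontr)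
    assume "theta_sum m a N x (i + s) \<noteq> 0"
    then obtain k' where "theta m k' x (i + s) = 1"
      by (metis bit_not_zero_iff theta_sum_eq_one)
    with far s show False
      by (intro theta_one_no_overlap[of m "j + k" x i k' s]) (auto simp: distrib_left)
  qed
qed

text \<open>Take the last offset q < m j, not a multiple of m, at which x is one. The theta sum
  vanishes at i + q, so some theta with k' \<ge> 1 reads off a one at i + q + m k'; by the
  maximality of q this one lies beyond i + m j, where it interleaves with the one read off
  from i + m j.\<close>

lemma clear_of_clear_theta_sum:
  assumes "0 < m" and "a 0 = 1"
    and clear: "clear m (theta_sum m a N x) i (m * j)" and one: "theta_sum m a N x (i + m * j) = 1"
  shows "clear m x i (m * j)"
proof (rule ccontr)
  define S where "S = {s. 1 \<le> s \<and> s < m * j \<and> \<not> m dvd s \<and> x (i + s) = 1}"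
  assume "\<not> clear m x i (m * j)"
  then have "S \<noteq> {}"
    unfolding S_def clear_def by (auto simp: bit_not_zero_iff)
  moreover have "finite S"
    unfolding S_def by (rule finite_subset[of _ "{..<m * j}"]) auto
  ultimately have "Max S \<in> S" and Max_ge: "\<And>s. s \<in> S \<Longrightarrow> s \<le> Max S"
    by auto
  then obtain q where "q = Max S" and q: "1 \<le> q" "q < m * j" "\<not> m dvd q" "x (i + q) = 1"
    unfolding S_def by blast
  have "theta_sum m a N x (i + q) = 0"
    using clearD[OF clear q(1-3)] .
  then obtain k' where "1 \<le> k'" and hit_q: "theta m k' x (i + q) = 1"
    using theta_sum_eq_zero[of a x "i + q" m N] \<open>a 0 = 1\<close> q(4) by metis
  obtain k where hit_j: "theta m k x (i + m * j) = 1"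
    using one by (rule theta_sum_eq_one)
  have ndvd: "\<not> m dvd (q + m * k')"
    using q(3) by (simp add: dvd_add_left_iff)
  have "m * j < q + m * k'"
  proof (rule ccontr)
    assume "\<not> m * j < q + m * k'"
    with ndvd have "q + m * k' < m * j"
      by (cases "q + m * k' = m * j") auto
    with hit_q q ndvd have "q + m * k' \<in> S"
      by (auto simp: S_def theta_eq_one_iff add.assoc)
    moreover have "0 < m * k'"
      using \<open>0 < m\<close> \<open>1 \<le> k'\<close> by simp
    ultimately show False
      using Max_ge \<open>q = Max S\<close> by fastforce
  qed
  then have "m * j - q < m * k'"
    using q(2) by linarith
  moreover have "\<not> m dvd (m * j - q)"
    using q(2,3) dvd_diff_nat[of m "m * j" "m * j - q"] by auto
  moreover from q(2) have "i + q + (m * j - q) = i + m * j" by simp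
  with hit_j have "theta m k x (i + q + (m * j - q)) = 1" by (simp only:)
  ultimately show False by (intro theta_one_no_overlap[OF hit_q])
qed

lemma theta_theta_sum:
  assumes "0 < m" and "a 0 = 1"
  shows "theta m j (theta_sum m a N x) i = (\<Sum>k\<le>N. a k * theta m (j + k) x i)"
proof -
  let ?y = "theta_sum m a N x"
  have "(\<Sum>k\<le>N. a k * theta m (j + k) x i) = (if clear m x i (m * j) then ?y (i + m * j) else 0)"
    by (simp add: theta_add theta_sum_def)
  moreover have "clear m ?y i (m * j) \<longleftrightarrow> clear m x i (m * j)" if "?y (i + m * j) = 1"
    using that clear_theta_sum[of m x i j a N] clear_of_clear_theta_sum[of m a N x i j] assms by blast
  ultimately show ?thesis
    by (cases "?y (i + m * j)") (auto simp: theta_eq)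
qed

section \<open>Convolution of coefficient sequences\<close>

definition conv :: "(nat \<Rightarrow> 'a::comm_semiring_0) \<Rightarrow> (nat \<Rightarrow> 'a) \<Rightarrow> nat \<Rightarrow> 'a" where
  "conv a b t = (\<Sum>j\<le>t. a j * b (t - j))"

lemma conv_0 [simp]: "conv a b 0 = a 0 * b 0"
  by (simp add: conv_def)

lemma conv_cong:
  "(\<And>j. j \<le> t \<Longrightarrow> a j = a' j) \<Longrightarrow> (\<And>j. j \<le> t \<Longrightarrow> b j = b' j) \<Longrightarrow> conv a b t = conv a' b' t"
  unfolding conv_def by (rule sum.cong) auto

lemma sum_mult_sum_shift_eq_conv:
  fixes g :: "nat \<Rightarrow> 'a::comm_semiring_0"
  assumes "\<And>t. N < t \<Longrightarrow> g t = 0"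
  shows "(\<Sum>j\<le>N. a j * (\<Sum>k\<le>N. b k * g (j + k))) = (\<Sum>t\<le>N. conv a b t * g t)"
proof -
  have "(\<Sum>j\<le>N. a j * (\<Sum>k\<le>N. b k * g (j + k))) = (\<Sum>(j, k)\<in>{..N} \<times> {..N}. a j * b k * g (j + k))"
    by (simp add: sum_distrib_left sum.cartesian_product mult.assoc)
  also have "\<dots> = (\<Sum>(j, k)\<in>{(j, k). j + k \<le> N}. a j * b k * g (j + k))"
  proof (rule sum.mono_neutral_right)
    show "\<forall>p\<in>{..N} \<times> {..N} - {(j, k). j + k \<le> N}. (case p of (j, k) \<Rightarrow> a j * b k * g (j + k)) = 0"
    proof
      fix p assume "p \<in> {..N} \<times> {..N} - {(j, k). j + k \<le> N}"
      then obtain j k where "p = (j, k)" and "N < j + k" by auto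
      then show "(case p of (j, k) \<Rightarrow> a j * b k * g (j + k)) = 0" by (simp add: assms)
    qed
  qed auto
  also have "\<dots> = (\<Sum>t\<le>N. \<Sum>j\<le>t. a j * b (t - j) * g (j + (t - j)))"
    by (rule sum.triangle_reindex_eq)
  also have "\<dots> = (\<Sum>t\<le>N. conv a b t * g t)"
    unfolding conv_def sum_distrib_right by (intro sum.cong) auto
  finally show ?thesis .
qed

lemma conv_right_inverse_exists:
  fixes a :: "nat \<Rightarrow> 'a::comm_ring_1"
  assumes "a 0 = 1"
  shows "\<exists>b. \<forall>t\<le>N. conv a b t = (if t = 0 then 1 else 0)"
proof (induction N)
  case 0
  show ?case using assms by (intro exI[of _ "\<lambda>_. 1"]) simp
next
  case (Suc N)
  then obtain b where b: "\<forall>t\<le>N. conv a b t = (if t = 0 then 1 else 0)" by blast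
  define b' where "b' = b(Suc N := b (Suc N) - conv a b (Suc N))"
  have "conv a b' t = conv a b t" if "t \<le> N" for t
    using that by (intro conv_cong) (auto simp: b'_def)
  moreover have "conv a b' (Suc N) = conv a b (Suc N) - a 0 * conv a b (Suc N)"
  proof -
    have "conv a b' (Suc N) = (\<Sum>j\<le>Suc N. a j * b (Suc N - j) - (if j = 0 then a j * conv a b (Suc N) else 0))"
      unfolding conv_def b'_def by (intro sum.cong) (auto simp: right_diff_distrib)
    then show ?thesis by (simp add: sum_subtractf conv_def)
  qed
  ultimately show ?case
    using b assms by (intro exI[of _ b']) (auto simp: le_Suc_eq)
qed

lemma vecs_shift:
  assumes "x \<in> vecs n" shows "x (i + n + j) = x (i + j)"
proof -
  have "i + n + j = (i + j) + n" by simp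
  moreover have "x ((i + j) + n) = x (i + j)" using assms unfolding vecs_def by blast
  ultimately show ?thesis by (simp only:)
qed

lemma theta_vecs: "x \<in> vecs n \<Longrightarrow> theta m k x (i + n) = theta m k x i"
  unfolding theta_def by (simp add: vecs_shift)

lemma theta_sum_vecs:
  assumes "x \<in> vecs n" shows "theta_sum m a N x \<in> vecs n"
  using theta_vecs[OF assms] unfolding vecs_def theta_sum_def by simp

text \<open>On an n-periodic vector, theta reads x at offset m k and needs x to vanish at the offset
  m k - n, which lies in the window and is not a multiple of m once m k > n.\<close>

lemma theta_vecs_eq_0:
  assumes "x \<in> vecs n" and "0 < m" and "\<not> m dvd n" and "n div m < k"
  shows "theta m k x i = 0"
proof (cases "clear m x i (m * k)")
  case True
  have "n < m * k"
    using \<open>n div m < k\<close> \<open>0 < m\<close> by (metis div_less_iff_less_mult mult.commute)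
  define s where "s = m * k - n"
  have "n \<noteq> 0" using \<open>\<not> m dvd n\<close> by (cases n) auto
  have "\<not> m dvd s"
    using \<open>\<not> m dvd n\<close> \<open>n < m * k\<close> dvd_diff_nat[of m "m * k" s] by (auto simp: s_def)
  then have "x (i + s) = 0"
    using \<open>n \<noteq> 0\<close> \<open>n < m * k\<close> by (intro clearD[OF True]) (auto simp: s_def)
  moreover have "x (i + m * k) = x (i + s)"
    using vecs_shift[OF assms(1), of "i + s" 0] \<open>n < m * k\<close> by (simp add: s_def)
  ultimately show ?thesis by (simp add: theta_eq)
qed (simp add: theta_eq)

lemma theta_sum_cong: "(\<And>k. k \<le> N \<Longrightarrow> a k = a' k) \<Longrightarrow> theta_sum m a N = theta_sum m a' N"
  unfolding theta_sum_def by (intro ext sum.cong) auto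

lemma theta_sum_compose:
  assumes "x \<in> vecs n" and "0 < m" and "\<not> m dvd n" and "b 0 = 1"
  shows "theta_sum m a (n div m) (theta_sum m b (n div m) x) = theta_sum m (conv a b) (n div m) x"
proof
  fix i
  have "theta_sum m a (n div m) (theta_sum m b (n div m) x) i
     = (\<Sum>j\<le>n div m. a j * (\<Sum>k\<le>n div m. b k * theta m (j + k) x i))"
    unfolding theta_sum_def[of m a] theta_theta_sum[of m b, OF \<open>0 < m\<close> \<open>b 0 = 1\<close>] ..
  also have "\<dots> = theta_sum m (conv a b) (n div m) x i"
    unfolding theta_sum_def
    by (rule sum_mult_sum_shift_eq_conv) (rule theta_vecs_eq_0[OF assms(1-3)])
  finally show "theta_sum m a (n div m) (theta_sum m b (n div m) x) i = theta_sum m (conv a b) (n div m) x i" .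
qed

lemma theta_sum_unit: "theta_sum m (\<lambda>k. if k = 0 then 1 else 0) N x = x"
proof
  fix i
  have "theta_sum m (\<lambda>k. if k = 0 then 1 else 0) N x i = (\<Sum>k\<le>N. if k = 0 then theta m k x i else 0)"
    unfolding theta_sum_def by (intro sum.cong) auto
  then show "theta_sum m (\<lambda>k. if k = 0 then 1 else 0) N x i = x i" by simp
qed

text \<open>The indicator of the residue class of m k modulo n is clear up to m k < n and is zero at
  every other m k' < n, so the theta sum evaluated on it at 0 picks out the k-th coefficient.\<close>

lemma theta_sum_indicator:
  assumes "0 < m" and "\<not> m dvd n" and "k \<le> n div m"
  obtains x where "x \<in> vecs n" and "\<And>a. theta_sum m a (n div m) x 0 = a k"
proof -
  define x :: "nat \<Rightarrow> bit" where "x = (\<lambda>p. if p mod n = m * k then 1 else 0)"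
  have "x \<in> vecs n" unfolding vecs_def x_def by simp
  have lt: "m * k' < n" if "k' \<le> n div m" for k'
  proof -
    have "m * k' \<le> m * (n div m)" using that by simp
    also have "\<dots> \<le> n" by (rule times_div_less_eq_dividend)
    finally show ?thesis using \<open>\<not> m dvd n\<close> by (cases "m * k' = n") auto
  qed
  have "clear m x 0 (m * k)"
    unfolding clear_def x_def using lt[OF \<open>k \<le> n div m\<close>] by auto
  then have "theta m k' x 0 = (if k' = k then 1 else 0)" if "k' \<le> n div m" for k'
    using lt[OF that] lt[OF \<open>k \<le> n div m\<close>] \<open>0 < m\<close> by (auto simp: theta_eq x_def)
  then have "theta_sum m a (n div m) x 0 = (\<Sum>k'\<le>n div m. if k' = k then a k' else 0)" for a
    unfolding theta_sum_def by (intro sum.cong) auto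
  then have "theta_sum m a (n div m) x 0 = a k" for a
    using \<open>k \<le> n div m\<close> by simp
  with \<open>x \<in> vecs n\<close> show thesis by (rule that)
qed

definition theta_map :: "nat \<Rightarrow> nat \<Rightarrow> (nat \<Rightarrow> bit) \<Rightarrow> (nat \<Rightarrow> bit) \<Rightarrow> nat \<Rightarrow> bit" where
  "theta_map n m a = (\<lambda>x\<in>vecs n. theta_sum m a (n div m) x)"

lemma theta_map_cong: "(\<And>k. k \<le> n div m \<Longrightarrow> a k = a' k) \<Longrightarrow> theta_map n m a = theta_map n m a'"
  unfolding theta_map_def using theta_sum_cong[of "n div m" a a' m] by simp

lemma theta_map_coeff_eq:
  assumes "0 < m" and "\<not> m dvd n" and "theta_map n m a = theta_map n m a'" and "k \<le> n div m"
  shows "a k = a' k"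
proof -
  obtain x where x: "x \<in> vecs n" "\<And>a. theta_sum m a (n div m) x 0 = a k"
    using theta_sum_indicator[OF assms(1,2,4)] by blast
  have "theta_map n m a x 0 = theta_map n m a' x 0"
    using assms(3) by simp
  then show ?thesis
    using x by (simp add: theta_map_def)
qed

lemma theta_map_Pi: "theta_map n m a \<in> vecs n \<rightarrow>\<^sub>E vecs n"
  unfolding theta_map_def restrict_PiE by (intro Pi_I theta_sum_vecs)

lemma theta_map_compose:
  assumes "0 < m" and "\<not> m dvd n" and "b 0 = 1"
  shows "compose (vecs n) (theta_map n m a) (theta_map n m b) = theta_map n m (conv a b)"
  unfolding compose_def theta_map_def
proof (rule restrict_ext)
  fix x assume "x \<in> vecs n"
  then show "restrict (theta_sum m a (n div m)) (vecs n) (restrict (theta_sum m b (n div m)) (vecs n) x)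
      = theta_sum m (conv a b) (n div m) x"
    using theta_sum_compose[where a = a and b = b, OF \<open>x \<in> vecs n\<close> assms] by (simp add: theta_sum_vecs)
qed

lemma theta_map_unit: "theta_map n m (\<lambda>k. if k = 0 then 1 else 0) = (\<lambda>x\<in>vecs n. x)"
  unfolding theta_map_def by (intro restrict_ext) (simp add: theta_sum_unit)

lemma carrier_Gnm: "carrier (Gnm n m) = {theta_map n m a | a. a 0 = 1}"
proof -
  have restrict_eq: "(\<lambda>x\<in>vecs n. \<lambda>i. theta m 0 x i + (\<Sum>k\<in>{1..n div m}. a k * theta m k x i))
      = theta_map n m (a(0 := 1))" for a
    unfolding theta_map_def
  proof (intro restrict_ext ext)
    fix x i
    have "(\<Sum>k\<in>{1..n div m}. a k * theta m k x i) = (\<Sum>k\<in>{1..n div m}. (a(0 := 1)) k * theta m k x i)"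
      by (intro sum.cong) auto
    then show "theta m 0 x i + (\<Sum>k\<in>{1..n div m}. a k * theta m k x i) = theta_sum m (a(0 := 1)) (n div m) x i"
      by (simp add: theta_sum_eq_head_tail)
  qed
  show ?thesis
    unfolding Gnm_def Gnm_maps_def partial_object.simps restrict_eq
  proof (intro equalityI subsetI)
    fix f assume "f \<in> {f. \<exists>a. f = theta_map n m (a(0 := 1))}"
    then obtain a where "f = theta_map n m (a(0 := 1))" by blast
    then show "f \<in> {theta_map n m a | a. a 0 = 1}" by (intro CollectI exI[of _ "a(0 := 1)"]) simp
  next
    fix f assume "f \<in> {theta_map n m a | a. a 0 = 1}"
    then obtain a where "f = theta_map n m a" and "a 0 = 1" by blast
    then have "f = theta_map n m (a(0 := 1))" by (simp add: fun_upd_idem)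
    then show "f \<in> {f. \<exists>a. f = theta_map n m (a(0 := 1))}" by blast
  qed
qed

lemma monoid_Gnm:
  assumes "0 < m" and "\<not> m dvd n"
  shows "monoid (Gnm n m)"
proof -
  have mult: "f \<otimes>\<^bsub>Gnm n m\<^esub> g = compose (vecs n) f g" for f g
    by (simp add: Gnm_def)
  have one: "\<one>\<^bsub>Gnm n m\<^esub> = (\<lambda>x\<in>vecs n. x)"
    by (simp add: Gnm_def)
  have funcset: "f \<in> vecs n \<rightarrow> vecs n" "f \<in> extensional (vecs n)" if "f \<in> carrier (Gnm n m)" for f
    using that theta_map_Pi unfolding carrier_Gnm PiE_iff Pi_iff by auto
  show ?thesis
  proof (rule monoidI)
    fix f g assume "f \<in> carrier (Gnm n m)" "g \<in> carrier (Gnm n m)"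
    then show "f \<otimes>\<^bsub>Gnm n m\<^esub> g \<in> carrier (Gnm n m)"
      unfolding carrier_Gnm mult using theta_map_compose[OF assms] by fastforce
  next
    show "\<one>\<^bsub>Gnm n m\<^esub> \<in> carrier (Gnm n m)"
      unfolding carrier_Gnm one
      by (intro CollectI exI[of _ "\<lambda>k. if k = 0 then 1 else 0"]) (simp add: theta_map_unit)
  next
    fix f g h assume "h \<in> carrier (Gnm n m)"
    then show "f \<otimes>\<^bsub>Gnm n m\<^esub> g \<otimes>\<^bsub>Gnm n m\<^esub> h = f \<otimes>\<^bsub>Gnm n m\<^esub> (g \<otimes>\<^bsub>Gnm n m\<^esub> h)"
      unfolding mult by (intro compose_assoc[symmetric] funcset(1))
  next
    fix f assume "f \<in> carrier (Gnm n m)"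
    then show "\<one>\<^bsub>Gnm n m\<^esub> \<otimes>\<^bsub>Gnm n m\<^esub> f = f" and "f \<otimes>\<^bsub>Gnm n m\<^esub> \<one>\<^bsub>Gnm n m\<^esub> = f"
      unfolding mult one using Id_compose[OF funcset] compose_Id[OF funcset] by simp_all
  qed
qed

section \<open>Polynomials modulo a power of X\<close>

lemma (in ring) eq_append_replicate_zero_if_low_coeffs_zero:
  assumes "N \<le> length p" and "\<forall>k<N. coeff p k = \<zero>"
  shows "p = take (length p - N) p @ replicate N \<zero>"
proof -
  have "drop (length p - N) p = replicate N \<zero>"
  proof (rule nth_equalityI)
    show "length (drop (length p - N) p) = length (replicate N \<zero>)"
      using assms(1) by simp
    fix t assume "t < length (drop (length p - N) p)"
    then have t: "t < N" using assms(1) by simp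
    then have "coeff p (N - 1 - t) = p ! (length p - N + t)"
      using assms(1) by (subst coeff_nth) (auto intro: arg_cong[where f = "(!) p"])
    then show "drop (length p - N) p ! t = replicate N \<zero> ! t"
      using assms t by simp
  qed
  then show ?thesis by (metis append_take_drop_id)
qed

lemma (in ring) coeff_map_a_inv: "set p \<subseteq> carrier R \<Longrightarrow> coeff (map (\<lambda>a. \<ominus> a) p) k = \<ominus> coeff p k"
  by (induction p) auto

lemma (in ring) coeff_rev_map_upt: "coeff (rev (map f [0..<N])) k = (if k < N then f k else \<zero>)"
  by (induction N) auto

context domain
begin

context
  fixes K :: "'a set"
  assumes K: "subring K R"
begin

lemma univ_poly_mult_var_pow:
  assumes "p \<in> carrier (K[X])"
  shows "p \<otimes>\<^bsub>K[X]\<^esub> (X [^]\<^bsub>K[X]\<^esub> N) = (if p = [] then [] else p @ replicate N \<zero>)"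
proof -
  interpret UP: ring "K[X]" by (rule univ_poly_is_ring[OF K])
  show ?thesis
  proof (induction N)
    case 0
    show ?case using assms by (simp add: univ_poly_zero)
  next
    case (Suc N)
    have "p \<otimes>\<^bsub>K[X]\<^esub> (X [^]\<^bsub>K[X]\<^esub> Suc N) = (p \<otimes>\<^bsub>K[X]\<^esub> (X [^]\<^bsub>K[X]\<^esub> N)) \<otimes>\<^bsub>K[X]\<^esub> X"
      using assms var_closed(1)[OF K] var_pow_closed[OF K] by (simp add: UP.m_assoc)
    also have "\<dots> = (if p \<otimes>\<^bsub>K[X]\<^esub> (X [^]\<^bsub>K[X]\<^esub> N) = [] then []
                         else (p \<otimes>\<^bsub>K[X]\<^esub> (X [^]\<^bsub>K[X]\<^esub> N)) @ [\<zero>])"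
      by (rule poly_mult_var[OF K UP.m_closed[OF assms var_pow_closed[OF K]]])
    also have "\<dots> = (if p = [] then [] else p @ replicate (Suc N) \<zero>)"
      unfolding Suc by (simp add: replicate_append_same)
    finally show ?case .
  qed
qed

lemma take_in_univ_poly:
  assumes "p \<in> carrier (K[X])" and "N < length p"
  shows "take (length p - N) p \<in> carrier (K[X])"
proof -
  from assms have "set p \<subseteq> K" and "lead_coeff p \<noteq> \<zero>"
    by (auto simp: univ_poly_carrier[symmetric] polynomial_def)
  moreover have "set (take (length p - N) p) \<subseteq> K"
    by (rule order_trans[OF set_take_subset \<open>set p \<subseteq> K\<close>])
  ultimately show ?thesis
    using assms(2) by (simp add: univ_poly_carrier[symmetric] polynomial_def)
qed

lemma mem_PIdl_var_pow_iff:
  assumes "p \<in> carrier (K[X])"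
  shows "p \<in> PIdl\<^bsub>K[X]\<^esub> (X [^]\<^bsub>K[X]\<^esub> N) \<longleftrightarrow> (\<forall>k<N. coeff p k = \<zero>)"
proof
  assume "p \<in> PIdl\<^bsub>K[X]\<^esub> (X [^]\<^bsub>K[X]\<^esub> N)"
  then obtain x where "x \<in> carrier (K[X])" and "p = x \<otimes>\<^bsub>K[X]\<^esub> (X [^]\<^bsub>K[X]\<^esub> N)"
    unfolding cgenideal_def by auto
  then show "\<forall>k<N. coeff p k = \<zero>"
    by (simp add: univ_poly_mult_var_pow append_coeff)
next
  assume low: "\<forall>k<N. coeff p k = \<zero>"
  have "\<exists>x\<in>carrier (K[X]). p = x \<otimes>\<^bsub>K[X]\<^esub> (X [^]\<^bsub>K[X]\<^esub> N)"
  proof (cases "p = []")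
    case True
    then show ?thesis
      using univ_poly_mult_var_pow[OF univ_poly_zero_closed, of N]
      by (intro bexI[of _ "[]"] univ_poly_zero_closed) simp
  next
    case False
    have "N \<le> degree p"
    proof (rule ccontr)
      assume "\<not> N \<le> degree p"
      then have "coeff p (degree p) = \<zero>" using low by simp
      moreover have "lead_coeff p \<noteq> \<zero>"
        using assms False by (simp add: univ_poly_carrier[symmetric] polynomial_def)
      ultimately show False using lead_coeff_simp[OF False] by simp
    qed
    then have "N < length p"
      using False by (cases p) auto
    define x where "x = take (length p - N) p"
    have "x \<in> carrier (K[X])" and "x \<noteq> []"
      unfolding x_def using take_in_univ_poly[OF assms \<open>N < length p\<close>] \<open>N < length p\<close> by auto
    moreover have "p = x @ replicate N \<zero>"
      unfolding x_def using \<open>N < length p\<close> low by (intro eq_append_replicate_zero_if_low_coeffs_zero) auto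
    ultimately show ?thesis
      using \<open>x \<noteq> []\<close> univ_poly_mult_var_pow[of x N] by (intro bexI[of _ x]) simp_all
  qed
  then show "p \<in> PIdl\<^bsub>K[X]\<^esub> (X [^]\<^bsub>K[X]\<^esub> N)"
    unfolding cgenideal_def by auto
qed

lemma univ_poly_coeff_minus:
  assumes "p \<in> carrier (K[X])" and "q \<in> carrier (K[X])"
  shows "coeff (p \<ominus>\<^bsub>K[X]\<^esub> q) k = coeff p k \<ominus> coeff q k"
proof -
  have p: "set p \<subseteq> carrier R" and q: "set q \<subseteq> carrier R"
    using assms polynomial_in_carrier[OF K] by (auto simp: univ_poly_carrier[symmetric])
  have minus: "p \<ominus>\<^bsub>K[X]\<^esub> q = poly_add p (map (\<lambda>a. \<ominus> a) q)"
    unfolding a_minus_def univ_poly_a_inv_def'[OF K assms(2)] univ_poly_add ..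
  have "set (map (\<lambda>a. \<ominus> a) q) \<subseteq> carrier R"
    using q by auto
  from poly_add_coeff[OF p this] show ?thesis
    unfolding minus coeff_map_a_inv[OF q] by (simp add: a_minus_def del: poly_add.simps)
qed

lemma rcos_PIdl_var_pow_eq_iff:
  assumes "p \<in> carrier (K[X])" and "q \<in> carrier (K[X])"
  shows "PIdl\<^bsub>K[X]\<^esub> (X [^]\<^bsub>K[X]\<^esub> N) +>\<^bsub>K[X]\<^esub> p = PIdl\<^bsub>K[X]\<^esub> (X [^]\<^bsub>K[X]\<^esub> N) +>\<^bsub>K[X]\<^esub> q
    \<longleftrightarrow> (\<forall>k<N. coeff p k = coeff q k)"
proof -
  interpret UP: cring "K[X]" by (rule univ_poly_is_cring[OF K])
  have "PIdl\<^bsub>K[X]\<^esub> (X [^]\<^bsub>K[X]\<^esub> N) +>\<^bsub>K[X]\<^esub> p = PIdl\<^bsub>K[X]\<^esub> (X [^]\<^bsub>K[X]\<^esub> N) +>\<^bsub>K[X]\<^esub> q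
    \<longleftrightarrow> p \<ominus>\<^bsub>K[X]\<^esub> q \<in> PIdl\<^bsub>K[X]\<^esub> (X [^]\<^bsub>K[X]\<^esub> N)"
    using UP.quotient_eq_iff_same_a_r_cos[OF UP.cgenideal_ideal[OF var_pow_closed[OF K]] assms] by simp
  also have "\<dots> \<longleftrightarrow> (\<forall>k<N. coeff (p \<ominus>\<^bsub>K[X]\<^esub> q) k = \<zero>)"
    by (rule mem_PIdl_var_pow_iff[OF UP.minus_closed[OF assms]])
  also have "\<dots> \<longleftrightarrow> (\<forall>k<N. coeff p k = coeff q k)"
    using assms polynomial_in_carrier[OF K]
    by (simp add: univ_poly_coeff_minus univ_poly_carrier[symmetric])
  finally show ?thesis .
qed

end

end

section \<open>The ring F_2[z]/(z^(l+1))\<close>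

lemma domain_F2: "domain F2"
  unfolding F2_def by (rule ZFact_prime_is_domain) simp

interpretation F2: domain F2
  by (rule domain_F2)

lemma carrier_F2: "carrier F2 = {\<zero>\<^bsub>F2\<^esub>, \<one>\<^bsub>F2\<^esub>}"
proof -
  interpret I: ideal "Idl\<^bsub>\<Z>\<^esub> {2}" \<Z>
    by (rule int.genideal_ideal) simp
  have "carrier F2 = range (ZMod 2)"
    unfolding F2_def ZFact_def FactRing_def A_RCOSETS_def' ZMod_def by auto
  also have "\<dots> = ZMod 2 ` {0, 1}"
  proof
    show "range (ZMod 2) \<subseteq> ZMod 2 ` {0, 1}"
    proof
      fix U assume "U \<in> range (ZMod 2)"
      then obtain a where "U = ZMod 2 a" by (rule rangeE)
      moreover have "a mod 2 \<in> {0, 1}" by auto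
      ultimately show "U \<in> ZMod 2 ` {0, 1}"
        using ZMod_mod[of 2 a] by (intro image_eqI[of _ _ "a mod 2"]) simp_all
    qed
  qed auto
  finally have "carrier F2 = {ZMod 2 0, ZMod 2 1}" by simp
  moreover have "ZMod 2 0 = \<zero>\<^bsub>F2\<^esub>"
    unfolding ZMod_def F2_def ZFact_def FactRing_def
    by (simp add: I.a_rcos_const[OF I.zero_closed[unfolded int_zero_eq]])
  moreover have "ZMod 2 1 = \<one>\<^bsub>F2\<^esub>"
    unfolding ZMod_def F2_def ZFact_def FactRing_def by simp
  ultimately show ?thesis by simp
qed

lemma F2_one_plus_one: "\<one>\<^bsub>F2\<^esub> \<oplus>\<^bsub>F2\<^esub> \<one>\<^bsub>F2\<^esub> = \<zero>\<^bsub>F2\<^esub>"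
proof -
  have "\<one>\<^bsub>F2\<^esub> \<oplus>\<^bsub>F2\<^esub> \<one>\<^bsub>F2\<^esub> \<noteq> \<one>\<^bsub>F2\<^esub>"
    using F2.add.l_cancel_one[OF F2.one_closed F2.one_closed] F2.one_not_zero by simp
  then show ?thesis
    using carrier_F2 F2.add.m_closed[OF F2.one_closed F2.one_closed] by auto
qed

definition bit_of :: "int set \<Rightarrow> bit" where
  "bit_of A = (if A = \<zero>\<^bsub>F2\<^esub> then 0 else 1)"

definition F2_of_bit :: "bit \<Rightarrow> int set" where
  "F2_of_bit b = (if b = 0 then \<zero>\<^bsub>F2\<^esub> else \<one>\<^bsub>F2\<^esub>)"

lemma bit_of_zero [simp]: "bit_of \<zero>\<^bsub>F2\<^esub> = 0"
  by (simp add: bit_of_def)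

lemma bit_of_one [simp]: "bit_of \<one>\<^bsub>F2\<^esub> = 1"
  using F2.one_not_zero by (simp add: bit_of_def)

lemma F2_cases: "A \<in> carrier F2 \<Longrightarrow> (A = \<zero>\<^bsub>F2\<^esub> \<Longrightarrow> P) \<Longrightarrow> (A = \<one>\<^bsub>F2\<^esub> \<Longrightarrow> P) \<Longrightarrow> P"
  using carrier_F2 by auto

lemma bit_of_add:
  "A \<in> carrier F2 \<Longrightarrow> B \<in> carrier F2 \<Longrightarrow> bit_of (A \<oplus>\<^bsub>F2\<^esub> B) = bit_of A + bit_of B"
  by (erule F2_cases; erule F2_cases) (simp_all add: F2_one_plus_one)

lemma bit_of_mult:
  "A \<in> carrier F2 \<Longrightarrow> B \<in> carrier F2 \<Longrightarrow> bit_of (A \<otimes>\<^bsub>F2\<^esub> B) = bit_of A * bit_of B"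
  by (erule F2_cases; erule F2_cases) simp_all

lemma bit_of_eq_iff:
  "A \<in> carrier F2 \<Longrightarrow> B \<in> carrier F2 \<Longrightarrow> bit_of A = bit_of B \<longleftrightarrow> A = B"
  by (erule F2_cases; erule F2_cases) (simp_all add: F2.one_not_zero[symmetric])

lemma bit_of_finsum:
  assumes "finite S" and "f \<in> S \<rightarrow> carrier F2"
  shows "bit_of (finsum F2 f S) = (\<Sum>s\<in>S. bit_of (f s))"
  using assms
proof (induction S rule: finite_induct)
  case (insert a S)
  then show ?case
    by (simp add: F2.finsum_insert F2.finsum_closed bit_of_add)
qed simp

lemma F2_of_bit_closed [simp]: "F2_of_bit b \<in> carrier F2"
  by (simp add: F2_of_bit_def)

lemma bit_of_F2_of_bit [simp]: "bit_of (F2_of_bit b) = b"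
  by (cases b) (simp_all add: F2_of_bit_def)

lemma cring_F2z: "cring F2z"
  unfolding F2z_def by (rule F2.univ_poly_is_cring[OF F2.carrier_is_subring])

interpretation F2z: cring F2z
  by (rule cring_F2z)

lemma set_subset_carrier_F2: "p \<in> carrier F2z \<Longrightarrow> set p \<subseteq> carrier F2"
  unfolding F2z_def univ_poly_carrier[symmetric] by (rule F2.polynomial_in_carrier[OF F2.carrier_is_subring])

definition coeff_bits :: "int set list \<Rightarrow> nat \<Rightarrow> bit" where
  "coeff_bits p k = bit_of (F2.coeff p k)"

lemma coeff_bits_mult:
  assumes "p \<in> carrier F2z" and "q \<in> carrier F2z"
  shows "coeff_bits (p \<otimes>\<^bsub>F2z\<^esub> q) k = conv (coeff_bits p) (coeff_bits q) k"
proof -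
  have p: "set p \<subseteq> carrier F2" and q: "set q \<subseteq> carrier F2"
    using assms by (auto dest: set_subset_carrier_F2)
  have "F2.coeff (p \<otimes>\<^bsub>F2z\<^esub> q) k = (\<Oplus>\<^bsub>F2\<^esub>j\<in>{..k}. F2.coeff p j \<otimes>\<^bsub>F2\<^esub> F2.coeff q (k - j))"
    unfolding F2z_def univ_poly_mult F2.poly_mult_coeff[OF p q] ..
  then show ?thesis
    unfolding coeff_bits_def conv_def using p q by (simp add: bit_of_finsum bit_of_mult Pi_def)
qed

lemma coeff_bits_one: "coeff_bits \<one>\<^bsub>F2z\<^esub> k = (if k = 0 then 1 else 0)"
  unfolding F2z_def univ_poly_one coeff_bits_def by simp

definition poly_of_bits :: "nat \<Rightarrow> (nat \<Rightarrow> bit) \<Rightarrow> int set list" where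
  "poly_of_bits N a = F2.normalize (rev (map (\<lambda>k. F2_of_bit (a k)) [0..<N]))"

lemma poly_of_bits_closed: "poly_of_bits N a \<in> carrier F2z"
  unfolding poly_of_bits_def F2z_def univ_poly_carrier[symmetric]
  by (rule F2.normalize_gives_polynomial) auto

lemma coeff_bits_poly_of_bits: "k < N \<Longrightarrow> coeff_bits (poly_of_bits N a) k = a k"
  unfolding poly_of_bits_def coeff_bits_def F2.normalize_coeff[symmetric] F2.coeff_rev_map_upt by simp

definition trunc_ideal :: "nat \<Rightarrow> int set list set" where
  "trunc_ideal l = PIdl\<^bsub>F2z\<^esub> (X\<^bsub>F2\<^esub> [^]\<^bsub>F2z\<^esub> (l + 1))"

abbreviation trunc_ring :: "nat \<Rightarrow> int set list set ring" where
  "trunc_ring l \<equiv> F2z Quot trunc_ideal l"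

lemma ideal_trunc_ideal: "ideal (trunc_ideal l) F2z"
  unfolding trunc_ideal_def F2z_def
  by (rule F2z.cgenideal_ideal[unfolded F2z_def]) (rule F2.var_pow_closed[OF F2.carrier_is_subring])

lemma cring_trunc_ring: "cring (trunc_ring l)"
  by (rule ideal.quotient_is_cring[OF ideal_trunc_ideal cring_F2z])

lemma carrier_trunc_ring: "carrier (trunc_ring l) = (\<lambda>p. trunc_ideal l +>\<^bsub>F2z\<^esub> p) ` carrier F2z"
  unfolding FactRing_def A_RCOSETS_def' by auto

lemma trunc_rcos_mult:
  assumes "p \<in> carrier F2z" and "q \<in> carrier F2z"
  shows "(trunc_ideal l +>\<^bsub>F2z\<^esub> p) \<otimes>\<^bsub>trunc_ring l\<^esub> (trunc_ideal l +>\<^bsub>F2z\<^esub> q)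
    = trunc_ideal l +>\<^bsub>F2z\<^esub> (p \<otimes>\<^bsub>F2z\<^esub> q)"
  unfolding FactRing_def using ideal.rcoset_mult_add[OF ideal_trunc_ideal assms] by simp

lemma one_trunc_ring: "\<one>\<^bsub>trunc_ring l\<^esub> = trunc_ideal l +>\<^bsub>F2z\<^esub> \<one>\<^bsub>F2z\<^esub>"
  unfolding FactRing_def by simp

lemma trunc_rcos_eq_iff:
  assumes "p \<in> carrier F2z" and "q \<in> carrier F2z"
  shows "trunc_ideal l +>\<^bsub>F2z\<^esub> p = trunc_ideal l +>\<^bsub>F2z\<^esub> q \<longleftrightarrow> (\<forall>k\<le>l. coeff_bits p k = coeff_bits q k)"
proof -
  have "trunc_ideal l +>\<^bsub>F2z\<^esub> p = trunc_ideal l +>\<^bsub>F2z\<^esub> q \<longleftrightarrow> (\<forall>k<l + 1. F2.coeff p k = F2.coeff q k)"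
    using F2.rcos_PIdl_var_pow_eq_iff[OF F2.carrier_is_subring, of p q "l + 1"] assms
    unfolding trunc_ideal_def F2z_def by simp
  also have "\<dots> \<longleftrightarrow> (\<forall>k\<le>l. coeff_bits p k = coeff_bits q k)"
    using assms by (auto simp: coeff_bits_def bit_of_eq_iff set_subset_carrier_F2)
  finally show ?thesis .
qed

text \<open>The low coefficients of a representative; by trunc_rcos_eq_iff they do not depend on the
  representative chosen.\<close>

definition coset_bits :: "nat \<Rightarrow> int set list set \<Rightarrow> nat \<Rightarrow> bit" where
  "coset_bits l U = coeff_bits (SOME p. p \<in> carrier F2z \<and> U = trunc_ideal l +>\<^bsub>F2z\<^esub> p)"

lemma coset_bits_rcos:
  assumes "p \<in> carrier F2z" and "k \<le> l"
  shows "coset_bits l (trunc_ideal l +>\<^bsub>F2z\<^esub> p) k = coeff_bits p k"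
proof -
  define q where "q = (SOME q. q \<in> carrier F2z \<and> trunc_ideal l +>\<^bsub>F2z\<^esub> p = trunc_ideal l +>\<^bsub>F2z\<^esub> q)"
  have "q \<in> carrier F2z \<and> trunc_ideal l +>\<^bsub>F2z\<^esub> p = trunc_ideal l +>\<^bsub>F2z\<^esub> q"
    unfolding q_def by (rule someI[of _ p]) (simp add: assms(1))
  then have "\<forall>k\<le>l. coeff_bits p k = coeff_bits q k"
    using trunc_rcos_eq_iff[OF assms(1), of q l] by simp
  then show ?thesis
    unfolding coset_bits_def q_def[symmetric] using assms(2) by simp
qed

lemma coset_bits_mult:
  assumes "U \<in> carrier (trunc_ring l)" and "V \<in> carrier (trunc_ring l)" and "k \<le> l"
  shows "coset_bits l (U \<otimes>\<^bsub>trunc_ring l\<^esub> V) k = conv (coset_bits l U) (coset_bits l V) k"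
proof -
  obtain p q where p: "p \<in> carrier F2z" "U = trunc_ideal l +>\<^bsub>F2z\<^esub> p"
    and q: "q \<in> carrier F2z" "V = trunc_ideal l +>\<^bsub>F2z\<^esub> q"
    using assms(1,2) unfolding carrier_trunc_ring by auto
  have "coset_bits l (U \<otimes>\<^bsub>trunc_ring l\<^esub> V) k = coeff_bits (p \<otimes>\<^bsub>F2z\<^esub> q) k"
    unfolding p(2) q(2) trunc_rcos_mult[OF p(1) q(1)] using p(1) q(1) assms(3) by (simp add: coset_bits_rcos)
  also have "\<dots> = conv (coeff_bits p) (coeff_bits q) k"
    by (rule coeff_bits_mult[OF p(1) q(1)])
  also have "\<dots> = conv (coset_bits l U) (coset_bits l V) k"
    unfolding p(2) q(2) using p(1) q(1) assms(3) by (intro conv_cong) (simp_all add: coset_bits_rcos)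
  finally show ?thesis .
qed

lemma trunc_ring_eqI:
  assumes "U \<in> carrier (trunc_ring l)" and "V \<in> carrier (trunc_ring l)"
    and "\<And>k. k \<le> l \<Longrightarrow> coset_bits l U k = coset_bits l V k"
  shows "U = V"
proof -
  obtain p q where p: "p \<in> carrier F2z" "U = trunc_ideal l +>\<^bsub>F2z\<^esub> p"
    and q: "q \<in> carrier F2z" "V = trunc_ideal l +>\<^bsub>F2z\<^esub> q"
    using assms(1,2) unfolding carrier_trunc_ring by auto
  show ?thesis
    using assms(3) unfolding p(2) q(2) trunc_rcos_eq_iff[OF p(1) q(1)]
    by (simp add: coset_bits_rcos p(1) q(1))
qed

lemma coset_bits_unit:
  assumes "U \<in> Units (trunc_ring l)"
  shows "coset_bits l U 0 = 1"
proof -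
  from assms obtain V where U: "U \<in> carrier (trunc_ring l)" and V: "V \<in> carrier (trunc_ring l)"
    and UV: "U \<otimes>\<^bsub>trunc_ring l\<^esub> V = \<one>\<^bsub>trunc_ring l\<^esub>"
    unfolding Units_def by auto
  have "coset_bits l U 0 * coset_bits l V 0 = coset_bits l (U \<otimes>\<^bsub>trunc_ring l\<^esub> V) 0"
    using coset_bits_mult[OF U V, of 0] by simp
  also have "\<dots> = 1"
    unfolding UV one_trunc_ring by (simp add: coset_bits_rcos coeff_bits_one)
  finally show ?thesis by (cases "coset_bits l U 0") simp_all
qed

lemma unit_with_coset_bits_exists:
  assumes "a 0 = 1"
  obtains U where "U \<in> Units (trunc_ring l)" and "\<And>k. k \<le> l \<Longrightarrow> coset_bits l U k = a k"
proof -
  interpret Q: cring "trunc_ring l" by (rule cring_trunc_ring)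
  obtain b where b: "\<forall>t\<le>l. conv a b t = (if t = 0 then 1 else 0)"
    using conv_right_inverse_exists[of a l] assms by auto
  define U where "U = trunc_ideal l +>\<^bsub>F2z\<^esub> poly_of_bits (l + 1) a"
  define V where "V = trunc_ideal l +>\<^bsub>F2z\<^esub> poly_of_bits (l + 1) b"
  have U: "U \<in> carrier (trunc_ring l)" and V: "V \<in> carrier (trunc_ring l)"
    unfolding U_def V_def carrier_trunc_ring by (auto intro: poly_of_bits_closed)
  have bits_U: "coset_bits l U k = a k" and bits_V: "coset_bits l V k = b k" if "k \<le> l" for k
    using that unfolding U_def V_def by (simp_all add: coset_bits_rcos poly_of_bits_closed coeff_bits_poly_of_bits)
  have UV: "U \<otimes>\<^bsub>trunc_ring l\<^esub> V = \<one>\<^bsub>trunc_ring l\<^esub>"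
  proof (rule trunc_ring_eqI[OF Q.m_closed[OF U V] Q.one_closed])
    fix k assume "k \<le> l"
    have "coset_bits l (U \<otimes>\<^bsub>trunc_ring l\<^esub> V) k = conv (coset_bits l U) (coset_bits l V) k"
      using coset_bits_mult[OF U V \<open>k \<le> l\<close>] .
    also have "\<dots> = conv a b k"
      using \<open>k \<le> l\<close> by (intro conv_cong) (simp_all add: bits_U bits_V)
    finally have "coset_bits l (U \<otimes>\<^bsub>trunc_ring l\<^esub> V) k = conv a b k" .
    then show "coset_bits l (U \<otimes>\<^bsub>trunc_ring l\<^esub> V) k = coset_bits l \<one>\<^bsub>trunc_ring l\<^esub> k"
      using b \<open>k \<le> l\<close> by (simp add: one_trunc_ring coset_bits_rcos coeff_bits_one)
  qed
  have "U \<in> Units (trunc_ring l)"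
    unfolding Units_def using U V UV Q.m_comm[OF U V] by (intro CollectI conjI bexI[of _ V]) simp_all
  then show thesis using bits_U by (rule that)
qed

section \<open>The isomorphism\<close>

lemma trunc_units_eq: "trunc_units l = units_of (trunc_ring l)"
  unfolding trunc_units_def trunc_ideal_def ..

definition theta_of_unit :: "nat \<Rightarrow> nat \<Rightarrow> int set list set \<Rightarrow> (nat \<Rightarrow> bit) \<Rightarrow> nat \<Rightarrow> bit" where
  "theta_of_unit n m U = theta_map n m (coset_bits (n div m) U)"

lemma theta_of_unit_closed:
  "U \<in> Units (trunc_ring (n div m)) \<Longrightarrow> theta_of_unit n m U \<in> carrier (Gnm n m)"
  unfolding theta_of_unit_def carrier_Gnm by (auto intro: coset_bits_unit)

lemma theta_of_unit_mult:
  assumes "0 < m" and "\<not> m dvd n"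
    and U: "U \<in> Units (trunc_ring (n div m))" and V: "V \<in> Units (trunc_ring (n div m))"
  shows "theta_of_unit n m (U \<otimes>\<^bsub>trunc_ring (n div m)\<^esub> V)
    = theta_of_unit n m U \<otimes>\<^bsub>Gnm n m\<^esub> theta_of_unit n m V"
proof -
  have "U \<in> carrier (trunc_ring (n div m))" and "V \<in> carrier (trunc_ring (n div m))"
    using U V by (simp_all add: Units_def)
  then have "theta_of_unit n m (U \<otimes>\<^bsub>trunc_ring (n div m)\<^esub> V)
      = theta_map n m (conv (coset_bits (n div m) U) (coset_bits (n div m) V))"
    unfolding theta_of_unit_def by (intro theta_map_cong coset_bits_mult)
  also have "\<dots> = compose (vecs n) (theta_of_unit n m U) (theta_of_unit n m V)"
    unfolding theta_of_unit_def
    by (rule theta_map_compose[where a = "coset_bits (n div m) U" and b = "coset_bits (n div m) V",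
          OF assms(1,2) coset_bits_unit[OF V], symmetric])
  finally show ?thesis
    by (simp add: Gnm_def)
qed

lemma inj_on_theta_of_unit:
  assumes "0 < m" and "\<not> m dvd n"
  shows "inj_on (theta_of_unit n m) (Units (trunc_ring (n div m)))"
proof (rule inj_onI)
  fix U V
  assume "U \<in> Units (trunc_ring (n div m))" and "V \<in> Units (trunc_ring (n div m))"
    and "theta_of_unit n m U = theta_of_unit n m V"
  then show "U = V"
    unfolding theta_of_unit_def
    by (intro trunc_ring_eqI theta_map_coeff_eq[OF assms]) (simp_all add: Units_def)
qed

lemma theta_of_unit_image:
  "theta_of_unit n m ` Units (trunc_ring (n div m)) = carrier (Gnm n m)"
proof
  show "theta_of_unit n m ` Units (trunc_ring (n div m)) \<subseteq> carrier (Gnm n m)"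
    using theta_of_unit_closed by auto
next
  show "carrier (Gnm n m) \<subseteq> theta_of_unit n m ` Units (trunc_ring (n div m))"
  proof
    fix f assume "f \<in> carrier (Gnm n m)"
    then obtain a where f: "f = theta_map n m a" and "a 0 = 1"
      unfolding carrier_Gnm by auto
    obtain U where "U \<in> Units (trunc_ring (n div m))"
      and "\<And>k. k \<le> n div m \<Longrightarrow> coset_bits (n div m) U k = a k"
      using unit_with_coset_bits_exists[of a "n div m"] \<open>a 0 = 1\<close> by blast
    then have "f = theta_of_unit n m U"
      unfolding f theta_of_unit_def by (intro theta_map_cong) simp
    then show "f \<in> theta_of_unit n m ` Units (trunc_ring (n div m))"
      using \<open>U \<in> Units (trunc_ring (n div m))\<close> by (rule image_eqI)
  qed
qed

lemma theta_of_unit_iso: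
  assumes "0 < m" and "\<not> m dvd n"
  shows "theta_of_unit n m \<in> iso (trunc_units (n div m)) (Gnm n m)"
  unfolding iso_def hom_def bij_betw_def trunc_units_eq units_of_carrier units_of_mult
  using theta_of_unit_closed theta_of_unit_mult[OF assms] inj_on_theta_of_unit[OF assms]
    theta_of_unit_image by auto

theorem theorem2:
  fixes n m :: nat
  assumes "n \<ge> 1" and "m \<ge> 2" and "\<not> m dvd n"
  shows "comm_group (Gnm n m) \<and> Gnm n m \<cong> trunc_units (n div m)"
proof -
  have "0 < m" using \<open>m \<ge> 2\<close> by simp
  interpret H: comm_group "trunc_units (n div m)"
    unfolding trunc_units_eq by (rule cring.axioms(2)[OF cring_trunc_ring, THEN comm_monoid.units_comm_group])
  have "trunc_units (n div m) \<cong> Gnm n m"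
    by (rule is_isoI[OF theta_of_unit_iso[OF \<open>0 < m\<close> assms(3)]])
  then show ?thesis
    using H.iso_imp_comm_group monoid_Gnm[OF \<open>0 < m\<close> assms(3)] H.iso_sym by blast
qed

end
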